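(* In the setting of the context, let $\mathbf{X}\in\{0,1\}^E$ be the indicator vector of the edges matched by MMP-ALG. Then, in the limit $T\to\infty$ with $|U|=o(\sqrt{T})$, $\mathbb{E}[f(\mathbf{X})]\ge (1-1/e)F(\mathbf{x}^* )$.
   Context: Bipartite graph $G=(U,V,E)$; online rounds $t=1,\dots,T$, in each of which independently at most one $v\in V$ arrives, $v$ with probability $p_v$, $\sum_v p_v\le 1$, $r_v=Tp_v\in[0,1]$. Each $u\in U$ can be matched at most once. $f:2^E\to\mathbb{R}_{\ge0}$ is non-negative monotone submodular (identified with a function on $\{0,1\}^E$ via indicator vectors), and $F$ is its multilinear extension $F(\mathbf{x})=\sum_{S\subseteq E}\prod_{e\in S}x_e\prod_{e\notin S}(1-x_e) f(S)$. $E(w)$ denotes the set of edges incident to $w$. $\mathbf{x}^*\in[0,1]^E$ satisfies $\sum_{e\in E(v)}x^*_e\le r_v$ for all $v\in V$ and $\sum_{e\in E(u)}x^*_e\le1$ for all $u\in U$. MMP-ALG: when $v$ arrives, sample at most one edge $e\in E(v)$, each $e$ with probability $x^*_e/r_v$; if $e=(u,v)$ is sampled and $u$ is still unmatched, match $e$, otherwise skip. *)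

theory Defs
  imports "HOL-Probability.Probability"
begin

text \<open>Edges are pairs (u,v) with u in U (offline side) and v in V (online side).\<close>

definition edges_at_v :: "('u \<times> 'v) set \<Rightarrow> 'v \<Rightarrow> ('u \<times> 'v) set" where
  "edges_at_v E v = {e \<in> E. snd e = v}"

definition edges_at_u :: "('u \<times> 'v) set \<Rightarrow> 'u \<Rightarrow> ('u \<times> 'v) set" where
  "edges_at_u E u = {e \<in> E. fst e = u}"

definition arrival_pmf :: "'v set \<Rightarrow> ('v \<Rightarrow> real) \<Rightarrow> 'v option pmf" where
  "arrival_pmf V p = embed_pmf (\<lambda>a. case a of
      None \<Rightarrow> 1 - (\<Sum>v\<in>V. p v)
    | Some v \<Rightarrow> (if v \<in> V then p v else 0))"

definition edge_pmf :: "('u \<times> 'v) set \<Rightarrow> ('u \<times> 'v \<Rightarrow> real) \<Rightarrow> real \<Rightarrow> 'v \<Rightarrow> ('u \<times> 'v) option pmf" where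
  "edge_pmf E x rv v = embed_pmf (\<lambda>a. case a of
      None \<Rightarrow> 1 - (\<Sum>e\<in>edges_at_v E v. x e / rv)
    | Some e \<Rightarrow> (if e \<in> edges_at_v E v then x e / rv else 0))"

definition round_pmf :: "nat \<Rightarrow> 'v set \<Rightarrow> ('u \<times> 'v) set \<Rightarrow> ('v \<Rightarrow> real) \<Rightarrow> ('u \<times> 'v \<Rightarrow> real)
    \<Rightarrow> ('u \<times> 'v) option pmf" where
  "round_pmf T V E p x = bind_pmf (arrival_pmf V p) (\<lambda>a. case a of
      None \<Rightarrow> return_pmf None
    | Some v \<Rightarrow> edge_pmf E x (real T * p v) v)"

definition mmp_step :: "('u \<times> 'v) set \<Rightarrow> ('u \<times> 'v) option \<Rightarrow> ('u \<times> 'v) set" where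
  "mmp_step M a = (case a of
      None \<Rightarrow> M
    | Some (u, v) \<Rightarrow> (if u \<notin> fst ` M then insert (u, v) M else M))"

primrec mmp_run :: "nat \<Rightarrow> nat \<Rightarrow> 'v set \<Rightarrow> ('u \<times> 'v) set \<Rightarrow> ('v \<Rightarrow> real) \<Rightarrow> ('u \<times> 'v \<Rightarrow> real)
    \<Rightarrow> ('u \<times> 'v) set pmf" where
  "mmp_run 0 T V E p x = return_pmf {}"
| "mmp_run (Suc t) T V E p x =
     bind_pmf (mmp_run t T V E p x) (\<lambda>M. map_pmf (mmp_step M) (round_pmf T V E p x))"

definition mmp_alg :: "nat \<Rightarrow> 'v set \<Rightarrow> ('u \<times> 'v) set \<Rightarrow> ('v \<Rightarrow> real) \<Rightarrow> ('u \<times> 'v \<Rightarrow> real)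
    \<Rightarrow> ('u \<times> 'v) set pmf" where
  "mmp_alg T V E p x = mmp_run T T V E p x"

definition monotone_submodular_on :: "'e set \<Rightarrow> ('e set \<Rightarrow> real) \<Rightarrow> bool" where
  "monotone_submodular_on E f \<longleftrightarrow>
     (\<forall>S. S \<subseteq> E \<longrightarrow> 0 \<le> f S) \<and>
     (\<forall>A B. A \<subseteq> B \<and> B \<subseteq> E \<longrightarrow> f A \<le> f B) \<and>
     (\<forall>A B. A \<subseteq> E \<and> B \<subseteq> E \<longrightarrow> f (A \<union> B) + f (A \<inter> B) \<le> f A + f B)"

definition multilinear_ext :: "'e set \<Rightarrow> ('e set \<Rightarrow> real) \<Rightarrow> ('e \<Rightarrow> real) \<Rightarrow> real" where
  "multilinear_ext E f x =
     (\<Sum>S\<in>Pow E. (\<Prod>e\<in>S. x e) * (\<Prod>e\<in>E - S. 1 - x e) * f S)"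

definition mmp_instance :: "nat \<Rightarrow> 'u set \<Rightarrow> 'v set \<Rightarrow> ('u \<times> 'v) set \<Rightarrow> ('v \<Rightarrow> real)
    \<Rightarrow> ('u \<times> 'v \<Rightarrow> real) \<Rightarrow> (('u \<times> 'v) set \<Rightarrow> real) \<Rightarrow> bool" where
  "mmp_instance T U V E p x f \<longleftrightarrow>
     T \<ge> 1 \<and> finite U \<and> finite V \<and> E \<subseteq> U \<times> V \<and>
     (\<forall>v\<in>V. 0 \<le> p v) \<and> (\<Sum>v\<in>V. p v) \<le> 1 \<and> (\<forall>v\<in>V. real T * p v \<le> 1) \<and>
     monotone_submodular_on E f \<and>
     (\<forall>e\<in>E. 0 \<le> x e \<and> x e \<le> 1) \<and>
     (\<forall>v\<in>V. (\<Sum>e\<in>edges_at_v E v. x e) \<le> real T * p v) \<and>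
     (\<forall>u\<in>U. (\<Sum>e\<in>edges_at_u E u. x e) \<le> 1)"

end

theory Submission
  imports Defs
begin

(* Write g_k = 1 - (1 - 1/T)^k and compare the algorithm, started from a matched set M and run
   for k rounds, with the fractional point z(M, g_k) that is 1 on M, 0 on the other edges at
   matched vertices and g_k x_e on every free edge e. By induction on k, the multilinear
   extension F satisfies F(z(M, g_k)) <= E f(outcome). The induction step is a one-round
   inequality for F, which follows from the concavity of F along nonnegative directions and the
   antitonicity of its partial derivatives (both consequences of submodularity); the degree
   constraint sum_{e at u} x_e <= 1 pays for the edges lost when u gets matched. For M = {} and
   k = T this gives E f(X) >= F(g_T x) >= g_T F(x) >= (1 - 1/e) F(x) for every T, with no
   asymptotic error term. *)

section \<open>The multilinear extension\<close>

definition unit_cube :: "'e set \<Rightarrow> ('e \<Rightarrow> real) set" where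
  "unit_cube D = {y. \<forall>e\<in>D. 0 \<le> y e \<and> y e \<le> 1}"

lemma unit_cube_override_on:
  "y \<in> unit_cube D \<Longrightarrow> y' \<in> unit_cube D \<Longrightarrow> override_on y y' A \<in> unit_cube D"
  unfolding unit_cube_def override_on_def by auto

lemma multilinear_ext_cong:
  assumes "\<And>e. e \<in> D \<Longrightarrow> y e = y' e"
  shows "multilinear_ext D h y = multilinear_ext D h y'"
  unfolding multilinear_ext_def
proof (rule sum.cong[OF refl])
  fix S assume "S \<in> Pow D"
  then have "(\<Prod>e\<in>S. y e) = (\<Prod>e\<in>S. y' e)" "(\<Prod>e\<in>D - S. 1 - y e) = (\<Prod>e\<in>D - S. 1 - y' e)"
    using assms by (auto intro!: prod.cong)
  then show "(\<Prod>e\<in>S. y e) * (\<Prod>e\<in>D - S. 1 - y e) * h S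
    = (\<Prod>e\<in>S. y' e) * (\<Prod>e\<in>D - S. 1 - y' e) * h S"
    by simp
qed

lemma multilinear_ext_diff:
  "multilinear_ext D (\<lambda>S. h S - h' S) y = multilinear_ext D h y - multilinear_ext D h' y"
  unfolding multilinear_ext_def by (simp add: sum_subtractf algebra_simps)

lemma multilinear_ext_uminus:
  "multilinear_ext D (\<lambda>S. - h S) y = - multilinear_ext D h y"
  unfolding multilinear_ext_def by (simp add: sum_negf)

lemma multilinear_ext_nonneg:
  assumes "\<And>S. S \<subseteq> D \<Longrightarrow> 0 \<le> h S" and "y \<in> unit_cube D"
  shows "0 \<le> multilinear_ext D h y"
  unfolding multilinear_ext_def
proof (rule sum_nonneg)
  fix S assume S: "S \<in> Pow D"
  have "0 \<le> (\<Prod>e\<in>S. y e)" "0 \<le> (\<Prod>e\<in>D - S. 1 - y e)"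
    using S assms(2) by (auto simp: unit_cube_def intro!: prod_nonneg)
  then show "0 \<le> (\<Prod>e\<in>S. y e) * (\<Prod>e\<in>D - S. 1 - y e) * h S"
    using S assms(1) by auto
qed

lemma multilinear_ext_indicator:
  assumes "finite D" "M \<subseteq> D"
  shows "multilinear_ext D h (\<lambda>e. if e \<in> M then 1 else 0) = h M"
proof -
  have "(\<Prod>e\<in>S. if e \<in> M then 1 else 0) * (\<Prod>e\<in>D - S. 1 - (if e \<in> M then 1 else 0)) * h S
      = (if S = M then h M else 0)" if S: "S \<subseteq> D" for S
  proof (cases "S = M")
    case False
    then consider e where "e \<in> S - M" | e where "e \<in> M - S" by blast
    then have "(\<Prod>e\<in>S. if e \<in> M then 1 else 0) = (0::real)
        \<or> (\<Prod>e\<in>D - S. 1 - (if e \<in> M then 1 else 0)) = (0::real)"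
    proof cases
      case 1
      then show ?thesis using S assms(1) by (intro disjI1 prod_zero) (auto intro: finite_subset)
    next
      case 2
      then show ?thesis using assms by (intro disjI2 prod_zero) auto
    qed
    then show ?thesis using False by auto
  qed simp
  then have "multilinear_ext D h (\<lambda>e. if e \<in> M then 1 else 0) = (\<Sum>S\<in>Pow D. if S = M then h M else 0)"
    unfolding multilinear_ext_def by (intro sum.cong) auto
  also have "\<dots> = h M" using assms by simp
  finally show ?thesis .
qed

lemma multilinear_ext_remove:
  assumes "finite D" "c \<in> D"
  shows "multilinear_ext D h y = y c * multilinear_ext (D - {c}) (\<lambda>S. h (insert c S)) y
     + (1 - y c) * multilinear_ext (D - {c}) h y"
proof -
  define D' where "D' = D - {c}"
  have D: "D = insert c D'" "c \<notin> D'" "finite D'" using assms by (auto simp: D'_def)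
  have inj: "inj_on (insert c) (Pow D')"
    unfolding inj_on_def by (meson D(2) PowD insert_ident subsetD)
  let ?t = "\<lambda>S. (\<Prod>e\<in>S. y e) * (\<Prod>e\<in>D - S. 1 - y e) * h S"
  have "multilinear_ext D h y = sum ?t (Pow D') + sum ?t (insert c ` Pow D')"
    unfolding multilinear_ext_def D(1) Pow_insert using D(2,3)
    by (subst sum.union_disjoint) (auto simp: D(1))
  also have "sum ?t (Pow D') = (1 - y c) * multilinear_ext D' h y"
    unfolding multilinear_ext_def sum_distrib_left
  proof (rule sum.cong[OF refl])
    fix S assume "S \<in> Pow D'"
    then have "D - S = insert c (D' - S)" "c \<notin> D' - S" using D by auto
    then show "?t S = (1 - y c) * ((\<Prod>e\<in>S. y e) * (\<Prod>e\<in>D' - S. 1 - y e) * h S)"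
      using D(3) by simp
  qed
  also have "sum ?t (insert c ` Pow D') = y c * multilinear_ext D' (\<lambda>S. h (insert c S)) y"
    unfolding sum.reindex[OF inj] multilinear_ext_def sum_distrib_left
  proof (rule sum.cong[OF refl])
    fix S assume S: "S \<in> Pow D'"
    then have "D - insert c S = D' - S" "finite S" "c \<notin> S"
      using D by (auto intro: finite_subset)
    then show "(?t \<circ> insert c) S = y c * ((\<Prod>e\<in>S. y e) * (\<Prod>e\<in>D' - S. 1 - y e) * h (insert c S))"
      by simp
  qed
  finally show ?thesis unfolding D'_def by simp
qed

lemma multilinear_ext_fun_upd:
  assumes "finite D" "c \<in> D"
  shows "multilinear_ext D h (y(c := t)) = t * multilinear_ext (D - {c}) (\<lambda>S. h (insert c S)) y
     + (1 - t) * multilinear_ext (D - {c}) h y"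
proof -
  have "multilinear_ext (D - {c}) h' (y(c := t)) = multilinear_ext (D - {c}) h' y" for h'
    by (rule multilinear_ext_cong) auto
  then show ?thesis using multilinear_ext_remove[OF assms, of h "y(c := t)"] by simp
qed

text \<open>The partial derivative \<open>\<partial>F/\<partial>y\<^sub>c\<close>, as a difference quotient: \<open>F\<close> is affine in \<open>y c\<close>.\<close>

definition multilinear_deriv :: "'e set \<Rightarrow> ('e set \<Rightarrow> real) \<Rightarrow> 'e \<Rightarrow> ('e \<Rightarrow> real) \<Rightarrow> real" where
  "multilinear_deriv D h c y = multilinear_ext D h (y(c := 1)) - multilinear_ext D h (y(c := 0))"

lemma multilinear_deriv_eq:
  assumes "finite D" "c \<in> D"
  shows "multilinear_deriv D h c y = multilinear_ext (D - {c}) (\<lambda>S. h (insert c S) - h S) y"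
  unfolding multilinear_deriv_def multilinear_ext_diff
  using multilinear_ext_fun_upd[OF assms, of h y] by simp

lemma multilinear_ext_fun_upd_deriv:
  assumes "finite D" "c \<in> D"
  shows "multilinear_ext D h (y(c := t)) = multilinear_ext D h (y(c := 0)) + t * multilinear_deriv D h c y"
  unfolding multilinear_deriv_def
  using multilinear_ext_fun_upd[OF assms, of h y t] multilinear_ext_fun_upd[OF assms, of h y 0]
    multilinear_ext_fun_upd[OF assms, of h y 1]
  by (simp add: algebra_simps)

lemma multilinear_deriv_nonneg:
  assumes "finite D" "c \<in> D" "y \<in> unit_cube D"
    and mono: "\<And>S S'. S \<subseteq> S' \<Longrightarrow> S' \<subseteq> D \<Longrightarrow> h S \<le> h S'"
  shows "0 \<le> multilinear_deriv D h c y"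
  unfolding multilinear_deriv_eq[OF assms(1,2)]
proof (rule multilinear_ext_nonneg)
  show "y \<in> unit_cube (D - {c})" using assms(3) by (simp add: unit_cube_def)
  show "0 \<le> h (insert c S) - h S" if "S \<subseteq> D - {c}" for S
    using that assms(2) mono[of S "insert c S"] by auto
qed

lemma multilinear_ext_mono:
  assumes fin: "finite D" and mono: "\<And>S S'. S \<subseteq> S' \<Longrightarrow> S' \<subseteq> D \<Longrightarrow> h S \<le> h S'"
    and y: "y \<in> unit_cube D" and y': "y' \<in> unit_cube D" and le: "\<And>e. e \<in> D \<Longrightarrow> y e \<le> y' e"
  shows "multilinear_ext D h y \<le> multilinear_ext D h y'"
proof -
  have "multilinear_ext D h y \<le> multilinear_ext D h (override_on y y' A)" if "A \<subseteq> D" for A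
    using that
  proof (induction A rule: infinite_finite_induct)
    case (infinite A)
    then show ?case using fin by (meson rev_finite_subset)
  next
    case (insert d A)
    let ?w = "override_on y y' A"
    have d: "d \<in> D" using insert by auto
    have deriv: "0 \<le> multilinear_deriv D h d ?w"
      using fin d unit_cube_override_on[OF y y'] mono by (rule multilinear_deriv_nonneg)
    have "multilinear_ext D h (?w(d := y d)) \<le> multilinear_ext D h (?w(d := y' d))"
      using multilinear_ext_fun_upd_deriv[OF fin d, of h ?w "y d"]
        multilinear_ext_fun_upd_deriv[OF fin d, of h ?w "y' d"] mult_right_mono[OF le[OF d] deriv]
      by linarith
    moreover have "?w(d := y d) = ?w" using insert(2) by (simp add: fun_eq_iff)
    ultimately have "multilinear_ext D h ?w \<le> multilinear_ext D h (override_on y y' (insert d A))"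
      unfolding override_on_insert by metis
    then show ?case using insert.IH insert.prems by (meson insert_subset order_trans)
  qed simp
  moreover have "multilinear_ext D h (override_on y y' D) = multilinear_ext D h y'"
    by (rule multilinear_ext_cong) simp
  ultimately show ?thesis by (metis order_refl)
qed

lemma monotone_submodular_onD:
  assumes "monotone_submodular_on D f"
  shows "S \<subseteq> D \<Longrightarrow> 0 \<le> f S"
    and "S \<subseteq> S' \<Longrightarrow> S' \<subseteq> D \<Longrightarrow> f S \<le> f S'"
    and "S \<subseteq> D \<Longrightarrow> S' \<subseteq> D \<Longrightarrow> f (S \<union> S') + f (S \<inter> S') \<le> f S + f S'"
  using assms unfolding monotone_submodular_on_def by blast+

text \<open>For submodular \<open>f\<close> the marginal gain \<open>S \<mapsto> f (insert c S) - f S\<close> is antitone, so its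
  multilinear extension, the partial derivative, is antitone too.\<close>

lemma multilinear_deriv_antimono:
  assumes fin: "finite D" and c: "c \<in> D" and f: "monotone_submodular_on D f"
    and y: "y \<in> unit_cube D" and y': "y' \<in> unit_cube D" and le: "\<And>e. e \<in> D \<Longrightarrow> y e \<le> y' e"
  shows "multilinear_deriv D f c y' \<le> multilinear_deriv D f c y"
proof -
  let ?gain = "\<lambda>S. f (insert c S) - f S"
  have "multilinear_ext (D - {c}) (\<lambda>S. - ?gain S) y \<le> multilinear_ext (D - {c}) (\<lambda>S. - ?gain S) y'"
  proof (rule multilinear_ext_mono)
    fix S S' assume S: "S \<subseteq> S'" "S' \<subseteq> D - {c}"
    have "f (insert c S \<union> S') + f (insert c S \<inter> S') \<le> f (insert c S) + f S'"
      using S c by (intro monotone_submodular_onD(3)[OF f]) auto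
    moreover have "insert c S \<union> S' = insert c S'" "insert c S \<inter> S' = S" using S by auto
    ultimately show "- ?gain S \<le> - ?gain S'" by simp
  qed (use fin y y' le in \<open>auto simp: unit_cube_def\<close>)
  then show ?thesis
    unfolding multilinear_deriv_eq[OF fin c] multilinear_ext_uminus by simp
qed

text \<open>Raising the coordinates in \<open>A\<close> one at a time from \<open>y\<close> to \<open>y'\<close>, each step changes \<open>F\<close> by
  \<open>(y' d - y d)\<close> times a partial derivative taken between \<open>y\<close> and \<open>y'\<close>.\<close>

lemma multilinear_ext_override_on_bounds:
  assumes fin: "finite D" and f: "monotone_submodular_on D f"
    and y: "y \<in> unit_cube D" and y': "y' \<in> unit_cube D" and le: "\<And>e. e \<in> D \<Longrightarrow> y e \<le> y' e"
    and "A \<subseteq> D"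
  shows "(\<Sum>e\<in>A. (y' e - y e) * multilinear_deriv D f e y')
           \<le> multilinear_ext D f (override_on y y' A) - multilinear_ext D f y
       \<and> multilinear_ext D f (override_on y y' A) - multilinear_ext D f y
           \<le> (\<Sum>e\<in>A. (y' e - y e) * multilinear_deriv D f e y)"
  using \<open>A \<subseteq> D\<close>
proof (induction A rule: infinite_finite_induct)
  case (infinite A)
  then show ?case using fin by (meson rev_finite_subset)
next
  case (insert d A)
  let ?w = "override_on y y' A"
  have d: "d \<in> D" using insert by auto
  have w: "?w \<in> unit_cube D" using y y' by (rule unit_cube_override_on)
  have "multilinear_ext D f (?w(d := t)) = multilinear_ext D f (?w(d := 0)) + t * multilinear_deriv D f d ?w"
    for t by (rule multilinear_ext_fun_upd_deriv[OF fin d])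
  from this[of "y' d"] this[of "y d"]
  have step: "multilinear_ext D f (override_on y y' (insert d A)) - multilinear_ext D f ?w
      = (y' d - y d) * multilinear_deriv D f d ?w"
    using insert(2) unfolding override_on_insert by (simp add: fun_upd_idem left_diff_distrib)
  have "multilinear_deriv D f d y' \<le> multilinear_deriv D f d ?w"
    using fin d f w y' by (rule multilinear_deriv_antimono) (use le in \<open>simp add: override_on_def\<close>)
  moreover have "multilinear_deriv D f d ?w \<le> multilinear_deriv D f d y"
    using fin d f y w by (rule multilinear_deriv_antimono) (use le in \<open>simp add: override_on_def\<close>)
  ultimately have "(y' d - y d) * multilinear_deriv D f d y' \<le> (y' d - y d) * multilinear_deriv D f d ?w"
    "(y' d - y d) * multilinear_deriv D f d ?w \<le> (y' d - y d) * multilinear_deriv D f d y"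
    using le[OF d] by (simp_all add: mult_left_mono)
  then show ?case using insert step by simp
qed simp

lemma multilinear_ext_diff_le_deriv:
  assumes "finite D" "monotone_submodular_on D f"
    "y \<in> unit_cube D" "y' \<in> unit_cube D" "\<And>e. e \<in> D \<Longrightarrow> y e \<le> y' e"
  shows "multilinear_ext D f y' - multilinear_ext D f y \<le> (\<Sum>e\<in>D. (y' e - y e) * multilinear_deriv D f e y)"
proof -
  have "multilinear_ext D f (override_on y y' D) = multilinear_ext D f y'"
    by (rule multilinear_ext_cong) simp
  then show ?thesis using multilinear_ext_override_on_bounds[OF assms order_refl] by simp
qed

lemma deriv_le_multilinear_ext_diff:
  assumes "finite D" "monotone_submodular_on D f"
    "y \<in> unit_cube D" "y' \<in> unit_cube D" "\<And>e. e \<in> D \<Longrightarrow> y e \<le> y' e"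
  shows "(\<Sum>e\<in>D. (y' e - y e) * multilinear_deriv D f e y') \<le> multilinear_ext D f y' - multilinear_ext D f y"
proof -
  have "multilinear_ext D f (override_on y y' D) = multilinear_ext D f y'"
    by (rule multilinear_ext_cong) simp
  then show ?thesis using multilinear_ext_override_on_bounds[OF assms order_refl] by simp
qed

text \<open>Concavity of \<open>t \<mapsto> F (t x)\<close> together with \<open>F 0 \<ge> 0\<close>.\<close>

lemma multilinear_ext_scale_ge:
  assumes fin: "finite D" and f: "monotone_submodular_on D f" and x: "x \<in> unit_cube D"
    and c: "0 \<le> c" "c \<le> 1"
  shows "c * multilinear_ext D f x \<le> multilinear_ext D f (\<lambda>e. c * x e)"
proof -
  let ?F = "multilinear_ext D f" and ?cx = "\<lambda>e. c * x e"
  have cx: "?cx \<in> unit_cube D" and zero: "(\<lambda>e. 0) \<in> unit_cube D"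
    using x c by (auto simp: unit_cube_def intro: mult_le_one)
  have x_ge: "c * x e \<le> x e" and cx_ge: "0 \<le> c * x e" if "e \<in> D" for e
    using that x c by (auto simp: unit_cube_def intro: mult_left_le_one_le)
  define P where "P = (\<Sum>e\<in>D. x e * multilinear_deriv D f e ?cx)"
  have "?F x - ?F ?cx \<le> (\<Sum>e\<in>D. (x e - c * x e) * multilinear_deriv D f e ?cx)"
    using fin f cx x x_ge by (rule multilinear_ext_diff_le_deriv)
  also have "\<dots> = (1 - c) * P"
    unfolding P_def sum_distrib_left by (rule sum.cong) (auto simp: algebra_simps)
  finally have upper: "?F x - ?F ?cx \<le> (1 - c) * P" .
  have "c * P = (\<Sum>e\<in>D. (c * x e - 0) * multilinear_deriv D f e ?cx)"
    unfolding P_def sum_distrib_left by (rule sum.cong) (auto simp: algebra_simps)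
  also have "\<dots> \<le> ?F ?cx - ?F (\<lambda>e. 0)"
    using fin f zero cx cx_ge by (rule deriv_le_multilinear_ext_diff)
  finally have lower: "c * P \<le> ?F ?cx - ?F (\<lambda>e. 0)" .
  have F0: "0 \<le> ?F (\<lambda>e. 0)"
    using zero by (intro multilinear_ext_nonneg monotone_submodular_onD(1)[OF f])
  have "c * (?F x - ?F ?cx) \<le> (1 - c) * (c * P)"
    using mult_left_mono[OF upper c(1)] by (simp add: mult.left_commute)
  also have "\<dots> \<le> (1 - c) * (?F ?cx - ?F (\<lambda>e. 0))"
    using lower c by (intro mult_left_mono) auto
  finally have "c * ?F x - c * ?F ?cx \<le> (1 - c) * ?F ?cx - (1 - c) * ?F (\<lambda>e. 0)"
    by (simp only: right_diff_distrib)
  moreover have "(1 - c) * ?F ?cx = ?F ?cx - c * ?F ?cx" by (simp add: left_diff_distrib)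
  moreover have "0 \<le> (1 - c) * ?F (\<lambda>e. 0)" using F0 c by simp
  ultimately show ?thesis by linarith
qed

section \<open>Relaxed states\<close>

lemma sum_weighted_group_sums_le:
  fixes w c :: "'a \<Rightarrow> real" and key :: "'a \<Rightarrow> 'k"
  assumes fin: "finite A" and w: "\<And>a. a \<in> A \<Longrightarrow> 0 \<le> w a" and c: "\<And>a. a \<in> A \<Longrightarrow> 0 \<le> c a"
    and group: "\<And>a. a \<in> A \<Longrightarrow> (\<Sum>b\<in>{b\<in>A. key b = key a}. w b) \<le> 1"
  shows "(\<Sum>a\<in>A. w a * (\<Sum>b\<in>{b\<in>A. key b = key a}. w b * c b)) \<le> (\<Sum>a\<in>A. w a * c a)"
proof -
  have "(\<Sum>a\<in>A. w a * (\<Sum>b\<in>{b\<in>A. key b = key a}. w b * c b))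
      = (\<Sum>a\<in>A. \<Sum>b\<in>A. if key b = key a then w a * (w b * c b) else 0)"
    using fin by (auto simp: sum_distrib_left sum.inter_filter intro!: sum.cong)
  also have "\<dots> = (\<Sum>b\<in>A. \<Sum>a\<in>A. if key b = key a then w a * (w b * c b) else 0)"
    by (rule sum.swap)
  also have "\<dots> = (\<Sum>b\<in>A. w b * c b * (\<Sum>a\<in>{a\<in>A. key a = key b}. w a))"
    using fin by (auto simp: sum_distrib_left sum.inter_filter mult_ac intro!: sum.cong)
  also have "\<dots> \<le> (\<Sum>b\<in>A. w b * c b * 1)"
    using w c group by (intro sum_mono mult_left_mono) auto
  finally show ?thesis by simp
qed

definition free_edges :: "('u \<times> 'v) set \<Rightarrow> ('u \<times> 'v) set \<Rightarrow> ('u \<times> 'v) set" where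
  "free_edges E M = {e \<in> E. fst e \<notin> fst ` M}"

definition relaxed_state :: "('u \<times> 'v \<Rightarrow> real) \<Rightarrow> ('u \<times> 'v) set \<Rightarrow> real \<Rightarrow> 'u \<times> 'v \<Rightarrow> real" where
  "relaxed_state x M g e = (if e \<in> M then 1 else if fst e \<in> fst ` M then 0 else g * x e)"

definition clear_vertex :: "'u \<Rightarrow> ('u \<times> 'v \<Rightarrow> real) \<Rightarrow> 'u \<times> 'v \<Rightarrow> real" where
  "clear_vertex u z e = (if fst e = u then 0 else z e)"

definition cleared_gain ::
    "('u \<times> 'v) set \<Rightarrow> (('u \<times> 'v) set \<Rightarrow> real) \<Rightarrow> ('u \<times> 'v \<Rightarrow> real) \<Rightarrow> ('u \<times> 'v) set \<Rightarrow> real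
      \<Rightarrow> 'u \<times> 'v \<Rightarrow> real" where
  "cleared_gain E f x M g e = multilinear_deriv E f e (clear_vertex (fst e) (relaxed_state x M g))"

lemma relaxed_state_in_unit_cube:
  assumes "x \<in> unit_cube E" "0 \<le> g" "g \<le> 1"
  shows "relaxed_state x M g \<in> unit_cube E"
  using assms by (auto simp: unit_cube_def relaxed_state_def intro: mult_le_one)

lemma clear_vertex_in_unit_cube: "z \<in> unit_cube E \<Longrightarrow> clear_vertex u z \<in> unit_cube E"
  by (simp add: unit_cube_def clear_vertex_def)

lemma relaxed_state_growth:
  assumes fin: "finite E" and f: "monotone_submodular_on E f" and x: "x \<in> unit_cube E"
    and g: "0 \<le> g" "g \<le> g'" "g' \<le> 1"
  shows "multilinear_ext E f (relaxed_state x M g') - multilinear_ext E f (relaxed_state x M g)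
    \<le> (g' - g) * (\<Sum>e\<in>free_edges E M. x e * cleared_gain E f x M g e)"
proof -
  let ?z = "relaxed_state x M g" and ?z' = "relaxed_state x M g'"
  have z: "?z \<in> unit_cube E" and z': "?z' \<in> unit_cube E"
    using x g by (auto intro: relaxed_state_in_unit_cube)
  have le: "?z e \<le> ?z' e" if "e \<in> E" for e
    using that x g by (auto simp: relaxed_state_def unit_cube_def intro: mult_right_mono)
  have "multilinear_ext E f ?z' - multilinear_ext E f ?z \<le> (\<Sum>e\<in>E. (?z' e - ?z e) * multilinear_deriv E f e ?z)"
    using fin f z z' le by (rule multilinear_ext_diff_le_deriv)
  also have "\<dots> \<le> (\<Sum>e\<in>E. if e \<in> free_edges E M then (g' - g) * (x e * cleared_gain E f x M g e) else 0)"
  proof (rule sum_mono)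
    fix e assume e: "e \<in> E"
    show "(?z' e - ?z e) * multilinear_deriv E f e ?z
      \<le> (if e \<in> free_edges E M then (g' - g) * (x e * cleared_gain E f x M g e) else 0)"
    proof (cases "e \<in> free_edges E M")
      case True
      then have diff: "?z' e - ?z e = (g' - g) * x e"
        by (auto simp: free_edges_def relaxed_state_def algebra_simps)
      have "multilinear_deriv E f e ?z \<le> cleared_gain E f x M g e"
        unfolding cleared_gain_def using fin e f clear_vertex_in_unit_cube[OF z] z
        by (rule multilinear_deriv_antimono) (use z in \<open>auto simp: clear_vertex_def unit_cube_def\<close>)
      moreover have "0 \<le> (g' - g) * x e" using e x g by (simp add: unit_cube_def)
      ultimately have "(g' - g) * x e * multilinear_deriv E f e ?z \<le> (g' - g) * x e * cleared_gain E f x M g e"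
        by (rule mult_left_mono)
      then show ?thesis using True diff by (simp add: mult.assoc)
    next
      case False
      then show ?thesis using e by (auto simp: free_edges_def relaxed_state_def)
    qed
  qed
  also have "\<dots> = (g' - g) * (\<Sum>e\<in>free_edges E M. x e * cleared_gain E f x M g e)"
    using fin by (auto simp: free_edges_def sum.inter_filter sum_distrib_left intro!: sum.cong)
  finally show ?thesis .
qed

text \<open>Matching a free edge \<open>e\<close> sets \<open>e\<close> to one and kills its vertex; by multilinearity this
  adds exactly the partial derivative at the point where the vertex of \<open>e\<close> is cleared.\<close>

lemma relaxed_state_insert:
  assumes fin: "finite E" and e: "e \<in> free_edges E M"
  shows "multilinear_ext E f (relaxed_state x (insert e M) g)
    = multilinear_ext E f (clear_vertex (fst e) (relaxed_state x M g)) + cleared_gain E f x M g e"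
proof -
  let ?c = "clear_vertex (fst e) (relaxed_state x M g)"
  have "multilinear_ext E f (relaxed_state x (insert e M) g) = multilinear_ext E f (?c(e := 1))"
  proof (rule multilinear_ext_cong)
    fix e' assume "e' \<in> E"
    have "e' \<notin> M" if "fst e' = fst e"
      using e that unfolding free_edges_def by (metis (mono_tags, lifting) imageI mem_Collect_eq)
    then show "relaxed_state x (insert e M) g e' = (?c(e := 1)) e'"
      by (auto simp: relaxed_state_def clear_vertex_def)
  qed
  moreover have "?c(e := 0) = ?c" by (rule ext) (simp add: clear_vertex_def)
  ultimately show ?thesis unfolding cleared_gain_def multilinear_deriv_def by simp
qed

lemma relaxed_state_clear_vertex:
  assumes fin: "finite E" and f: "monotone_submodular_on E f" and x: "x \<in> unit_cube E"
    and g: "0 \<le> g" "g \<le> 1" and u: "u \<notin> fst ` M"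
  shows "multilinear_ext E f (relaxed_state x M g) - multilinear_ext E f (clear_vertex u (relaxed_state x M g))
    \<le> g * (\<Sum>e\<in>edges_at_u E u. x e * cleared_gain E f x M g e)"
proof -
  let ?z = "relaxed_state x M g"
  have z: "?z \<in> unit_cube E" using x g by (rule relaxed_state_in_unit_cube)
  have "multilinear_ext E f ?z - multilinear_ext E f (clear_vertex u ?z)
      \<le> (\<Sum>e\<in>E. (?z e - clear_vertex u ?z e) * multilinear_deriv E f e (clear_vertex u ?z))"
    using fin f clear_vertex_in_unit_cube[OF z] z
    by (rule multilinear_ext_diff_le_deriv) (use z in \<open>auto simp: clear_vertex_def unit_cube_def\<close>)
  also have "\<dots> = (\<Sum>e\<in>E. if fst e = u then g * (x e * cleared_gain E f x M g e) else 0)"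
  proof (rule sum.cong[OF refl])
    fix e assume "e \<in> E"
    have "e \<notin> M" if "fst e = u" using u that by force
    then show "(?z e - clear_vertex u ?z e) * multilinear_deriv E f e (clear_vertex u ?z)
      = (if fst e = u then g * (x e * cleared_gain E f x M g e) else 0)"
      using u by (auto simp: relaxed_state_def clear_vertex_def cleared_gain_def)
  qed
  also have "\<dots> = g * (\<Sum>e\<in>edges_at_u E u. x e * cleared_gain E f x M g e)"
    using fin by (auto simp: edges_at_u_def sum.inter_filter sum_distrib_left intro!: sum.cong)
  finally show ?thesis .
qed

lemma cleared_gain_nonneg:
  assumes "finite E" "monotone_submodular_on E f" "x \<in> unit_cube E" "0 \<le> g" "g \<le> 1" "e \<in> E"
  shows "0 \<le> cleared_gain E f x M g e"
  unfolding cleared_gain_def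
  using assms(1,6) clear_vertex_in_unit_cube[OF relaxed_state_in_unit_cube[OF assms(3-5)]]
  by (rule multilinear_deriv_nonneg) (rule monotone_submodular_onD(2)[OF assms(2)])

text \<open>The free edges at a vertex are all its edges, and by the degree bound their weights sum
  to at most one.\<close>

lemma sum_cleared_gains_at_vertex_le:
  assumes fin: "finite E" and f: "monotone_submodular_on E f" and x: "x \<in> unit_cube E"
    and deg: "\<And>u. (\<Sum>e\<in>edges_at_u E u. x e) \<le> 1" and g: "0 \<le> g" "g \<le> 1"
  shows "(\<Sum>e\<in>free_edges E M. x e * (\<Sum>e'\<in>edges_at_u E (fst e). x e' * cleared_gain E f x M g e'))
    \<le> (\<Sum>e\<in>free_edges E M. x e * cleared_gain E f x M g e)"
proof -
  let ?free = "free_edges E M" and ?gain = "cleared_gain E f x M g"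
  have group_free: "edges_at_u E (fst e) = {e'\<in>?free. fst e' = fst e}" if "e \<in> ?free" for e
    using that by (auto simp: edges_at_u_def free_edges_def image_iff)
  have "(\<Sum>e\<in>?free. x e * (\<Sum>e'\<in>edges_at_u E (fst e). x e' * ?gain e'))
      = (\<Sum>e\<in>?free. x e * (\<Sum>e'\<in>{e'\<in>?free. fst e' = fst e}. x e' * ?gain e'))"
    using group_free by (intro sum.cong) auto
  also have "\<dots> \<le> (\<Sum>e\<in>?free. x e * ?gain e)"
  proof (rule sum_weighted_group_sums_le)
    show "finite ?free" using fin by (simp add: free_edges_def)
    show "0 \<le> x e" "0 \<le> ?gain e" if "e \<in> ?free" for e
      using that x cleared_gain_nonneg[OF fin f x g] by (auto simp: free_edges_def unit_cube_def)
    show "(\<Sum>e'\<in>{e'\<in>?free. fst e' = fst e}. x e') \<le> 1" if "e \<in> ?free" for e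
      using deg[of "fst e"] group_free[OF that] by simp
  qed
  finally show ?thesis .
qed

text \<open>Matching a free edge \<open>e\<close> gains its cleared gain but loses at most \<open>g\<close> times the gains
  of the edges at its vertex; by the previous lemma these losses sum to at most \<open>g\<close> times the
  total gain, which is exactly what raising \<open>g\<close> to \<open>g + q (1 - g)\<close> may cost.\<close>

lemma relaxed_state_step:
  assumes fin: "finite E" and f: "monotone_submodular_on E f" and x: "x \<in> unit_cube E"
    and deg: "\<And>u. (\<Sum>e\<in>edges_at_u E u. x e) \<le> 1"
    and g: "0 \<le> g" "g \<le> 1" and q: "0 \<le> q" "q \<le> 1"
  shows "multilinear_ext E f (relaxed_state x M (g + q * (1 - g)))
    \<le> (1 - (\<Sum>e\<in>free_edges E M. q * x e)) * multilinear_ext E f (relaxed_state x M g)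
      + (\<Sum>e\<in>free_edges E M. q * x e * multilinear_ext E f (relaxed_state x (insert e M) g))"
proof -
  let ?F = "multilinear_ext E f" and ?z = "relaxed_state x M g" and ?free = "free_edges E M"
  let ?gain = "cleared_gain E f x M g"
  let ?group = "\<lambda>e. \<Sum>e'\<in>edges_at_u E (fst e). x e' * ?gain e'"
  define s where "s = (\<Sum>e\<in>?free. q * x e)"
  define A where "A = (\<Sum>e\<in>?free. x e * ?gain e)"
  define B where "B = (\<Sum>e\<in>?free. x e * ?group e)"
  have free: "e \<in> E" "fst e \<notin> fst ` M" if "e \<in> ?free" for e
    using that by (auto simp: free_edges_def)
  have matched: "?F ?z - g * ?group e + ?gain e \<le> ?F (relaxed_state x (insert e M) g)" if "e \<in> ?free" for e
    using relaxed_state_clear_vertex[OF fin f x g free(2)[OF that]] relaxed_state_insert[OF fin that, of f x g]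
    by linarith
  have "(\<Sum>e\<in>?free. q * x e * (?F ?z - g * ?group e + ?gain e))
      \<le> (\<Sum>e\<in>?free. q * x e * ?F (relaxed_state x (insert e M) g))"
    using q x free(1) matched by (intro sum_mono mult_left_mono) (auto simp: unit_cube_def)
  moreover have "(\<Sum>e\<in>?free. q * x e * (?F ?z - g * ?group e + ?gain e)) = s * ?F ?z - q * g * B + q * A"
    unfolding s_def A_def B_def
    by (simp add: sum.distrib sum_subtractf sum_distrib_left sum_distrib_right algebra_simps)
  moreover have "?F (relaxed_state x M (g + q * (1 - g))) - ?F ?z \<le> q * (1 - g) * A"
  proof -
    have "0 \<le> q * (1 - g)" "0 \<le> (1 - q) * (1 - g)" using g q by simp_all
    then have "g \<le> g + q * (1 - g)" "g + q * (1 - g) \<le> 1" by (simp_all add: algebra_simps)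
    from relaxed_state_growth[OF fin f x g(1) this, of M] show ?thesis by (simp add: A_def)
  qed
  moreover have "q * g * B \<le> q * g * A"
    using sum_cleared_gains_at_vertex_le[OF fin f x deg g, of M] q g unfolding A_def B_def
    by (intro mult_left_mono) auto
  moreover have "(1 - s) * ?F ?z = ?F ?z - s * ?F ?z" "q * (1 - g) * A = q * A - q * g * A"
    by (simp_all add: algebra_simps)
  ultimately show ?thesis unfolding s_def by linarith
qed

section \<open>The algorithm as a Markov chain\<close>

lemma pmf_embed_option:
  fixes w :: "'a \<Rightarrow> real"
  assumes "finite A" "\<And>a. a \<in> A \<Longrightarrow> 0 \<le> w a" "(\<Sum>a\<in>A. w a) \<le> 1"
  defines "d \<equiv> \<lambda>b. case b of None \<Rightarrow> 1 - (\<Sum>a\<in>A. w a) | Some a \<Rightarrow> if a \<in> A then w a else 0"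
  shows "pmf (embed_pmf d) b = d b"
proof (rule pmf_embed_pmf)
  show "0 \<le> d b" for b
    using assms by (cases b) (auto simp: d_def)
  have "(\<integral>\<^sup>+b. ennreal (d b) \<partial>count_space UNIV) = (\<Sum>b\<in>insert None (Some ` A). ennreal (d b))"
    using assms(1) by (intro nn_integral_count_space') (auto simp: d_def split: option.split)
  also have "\<dots> = ennreal (\<Sum>b\<in>insert None (Some ` A). d b)"
    using \<open>\<And>b. 0 \<le> d b\<close> by (simp add: sum_nonneg)
  also have "(\<Sum>b\<in>insert None (Some ` A). d b) = 1"
    using assms(1) by (simp add: d_def sum.reindex)
  finally show "(\<integral>\<^sup>+b. ennreal (d b) \<partial>count_space UNIV) = 1" by simp
qed

lemma sum_pmf_Some_le_1:
  assumes "finite A"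
  shows "(\<Sum>a\<in>A. pmf R (Some a)) \<le> 1"
proof -
  have "(\<Sum>a\<in>A. pmf R (Some a)) = measure_pmf.prob R (Some ` A)"
    using assms by (simp add: measure_measure_pmf_finite sum.reindex)
  then show ?thesis by simp
qed

lemma expectation_option_pmf:
  fixes h :: "'a option \<Rightarrow> real"
  assumes "finite A" "set_pmf R \<subseteq> insert None (Some ` A)"
  shows "measure_pmf.expectation R h
    = (1 - (\<Sum>a\<in>A. pmf R (Some a))) * h None + (\<Sum>a\<in>A. pmf R (Some a) * h (Some a))"
proof -
  have "(\<Sum>b\<in>insert None (Some ` A). pmf R b) = 1"
    using assms by (intro sum_pmf_eq_1) auto
  then have "pmf R None = 1 - (\<Sum>a\<in>A. pmf R (Some a))"
    using assms(1) by (simp add: sum.reindex)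
  moreover have "measure_pmf.expectation R h = (\<Sum>b\<in>insert None (Some ` A). h b * pmf R b)"
    using assms by (intro integral_measure_pmf_real) auto
  ultimately show ?thesis
    using assms(1) by (simp add: sum.reindex mult.commute)
qed

lemma expectation_bind_pmf_finite:
  fixes h :: "'b \<Rightarrow> real"
  assumes "finite (set_pmf p)" "\<And>a. a \<in> set_pmf p \<Longrightarrow> finite (set_pmf (q a))"
  shows "measure_pmf.expectation (bind_pmf p q) h
    = measure_pmf.expectation p (\<lambda>a. measure_pmf.expectation (q a) h)"
proof -
  have "measure_pmf.expectation (bind_pmf p q) h
      = (\<Sum>a\<in>set_pmf p. pmf p a *\<^sub>R measure_pmf.expectation (q a) h)"
    using assms by (intro pmf_expectation_bind) auto
  also have "\<dots> = measure_pmf.expectation p (\<lambda>a. measure_pmf.expectation (q a) h)"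
    by (subst integral_measure_pmf_real[of "set_pmf p"]) (use assms in \<open>auto simp: mult.commute\<close>)
  finally show ?thesis .
qed

text \<open>Unlike \<open>mmp_run\<close>, this unfolds the first round, so that the induction can start from an
  arbitrary matched set \<open>M\<close>.\<close>

primrec mmp_from :: "('u \<times> 'v) option pmf \<Rightarrow> nat \<Rightarrow> ('u \<times> 'v) set \<Rightarrow> ('u \<times> 'v) set pmf" where
  "mmp_from R 0 M = return_pmf M"
| "mmp_from R (Suc k) M = bind_pmf R (\<lambda>a. mmp_from R k (mmp_step M a))"

lemma mmp_from_Suc_last:
  "mmp_from R (Suc k) M = bind_pmf (mmp_from R k M) (\<lambda>N. map_pmf (mmp_step N) R)"
proof (induction k arbitrary: M)
  case 0
  then show ?case by (simp add: bind_return_pmf map_pmf_def)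
next
  case (Suc k)
  have "mmp_from R (Suc (Suc k)) M
      = bind_pmf R (\<lambda>a. bind_pmf (mmp_from R k (mmp_step M a)) (\<lambda>N. map_pmf (mmp_step N) R))"
    by (simp only: mmp_from.simps(2)[of R "Suc k" M] Suc.IH)
  also have "\<dots> = bind_pmf (mmp_from R (Suc k) M) (\<lambda>N. map_pmf (mmp_step N) R)"
    by (simp add: bind_assoc_pmf)
  finally show ?case .
qed

lemma mmp_run_eq_mmp_from: "mmp_run t T V E p x = mmp_from (round_pmf T V E p x) t {}"
  by (induction t) (simp_all only: mmp_run.simps mmp_from.simps(1) mmp_from_Suc_last)

lemma mmp_step_subset: "a \<in> insert None (Some ` E) \<Longrightarrow> mmp_step M a \<subseteq> M \<union> E"
  unfolding mmp_step_def by (auto split: option.splits)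

lemma set_pmf_mmp_from:
  assumes "set_pmf R \<subseteq> insert None (Some ` E)"
  shows "set_pmf (mmp_from R k M) \<subseteq> Pow (M \<union> E)"
proof (induction k arbitrary: M)
  case (Suc k)
  have "mmp_step M a \<union> E \<subseteq> M \<union> E" if "a \<in> set_pmf R" for a
    using mmp_step_subset[of a E M] that assms by blast
  then show ?case using Suc.IH by fastforce
qed simp

lemma expectation_mmp_from_Suc:
  fixes h :: "('u \<times> 'v) set \<Rightarrow> real"
  assumes R: "set_pmf R \<subseteq> insert None (Some ` E)" and fin: "finite E" "finite M"
  shows "measure_pmf.expectation (mmp_from R (Suc k) M) h
    = measure_pmf.expectation R (\<lambda>a. measure_pmf.expectation (mmp_from R k (mmp_step M a)) h)"
  unfolding mmp_from.simps
proof (rule expectation_bind_pmf_finite)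
  show "finite (set_pmf R)" using fin(1) by (intro finite_subset[OF R]) simp
  fix a assume "a \<in> set_pmf R"
  then have "finite (mmp_step M a \<union> E)" using R mmp_step_subset[of a E M] fin by (auto intro: finite_subset)
  then show "finite (set_pmf (mmp_from R k (mmp_step M a)))"
    using set_pmf_mmp_from[OF R] by (meson finite_Pow_iff finite_subset)
qed

lemma expectation_mmp_step:
  fixes \<phi> :: "('u \<times> 'v) set \<Rightarrow> real"
  assumes fin: "finite E" and R: "set_pmf R \<subseteq> insert None (Some ` E)"
  shows "measure_pmf.expectation R (\<lambda>a. \<phi> (mmp_step M a))
    = (1 - (\<Sum>e\<in>free_edges E M. pmf R (Some e))) * \<phi> M
      + (\<Sum>e\<in>free_edges E M. pmf R (Some e) * \<phi> (insert e M))"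
proof -
  let ?free = "free_edges E M"
  have step: "mmp_step M (Some e) = (if e \<in> ?free then insert e M else M)" if "e \<in> E" for e
    using that by (cases e) (auto simp: mmp_step_def free_edges_def)
  have split: "(\<Sum>e\<in>E. w e) = (\<Sum>e\<in>E - ?free. w e) + (\<Sum>e\<in>?free. w e)" for w :: "_ \<Rightarrow> real"
    using fin by (intro sum.subset_diff) (auto simp: free_edges_def)
  have "measure_pmf.expectation R (\<lambda>a. \<phi> (mmp_step M a))
      = (1 - (\<Sum>e\<in>E. pmf R (Some e))) * \<phi> M + (\<Sum>e\<in>E. pmf R (Some e) * \<phi> (mmp_step M (Some e)))"
    using expectation_option_pmf[OF fin R] by (simp add: mmp_step_def)
  also have "(\<Sum>e\<in>E. pmf R (Some e) * \<phi> (mmp_step M (Some e)))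
      = (\<Sum>e\<in>E - ?free. pmf R (Some e)) * \<phi> M + (\<Sum>e\<in>?free. pmf R (Some e) * \<phi> (insert e M))"
    unfolding split[of "\<lambda>e. pmf R (Some e) * \<phi> (mmp_step M (Some e))"] sum_distrib_right
    using step by (intro arg_cong2[where f = "(+)"] sum.cong) (auto simp: free_edges_def)
  finally show ?thesis
    unfolding split[of "\<lambda>e. pmf R (Some e)"] by (simp add: algebra_simps)
qed

lemma relaxed_state_le_expectation_mmp_from:
  assumes fin: "finite E" and f: "monotone_submodular_on E f" and x: "x \<in> unit_cube E"
    and deg: "\<And>u. (\<Sum>e\<in>edges_at_u E u. x e) \<le> 1" and q: "0 \<le> q" "q \<le> 1"
    and R: "set_pmf R \<subseteq> insert None (Some ` E)" and pmf_R: "\<And>e. e \<in> E \<Longrightarrow> pmf R (Some e) = q * x e"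
  shows "M \<subseteq> E \<Longrightarrow> multilinear_ext E f (relaxed_state x M (1 - (1 - q) ^ k))
           \<le> measure_pmf.expectation (mmp_from R k M) f"
proof (induction k arbitrary: M)
  case 0
  have "multilinear_ext E f (relaxed_state x M (1 - (1 - q) ^ 0))
      = multilinear_ext E f (\<lambda>e. if e \<in> M then 1 else 0)"
    by (rule multilinear_ext_cong) (auto simp: relaxed_state_def)
  then show ?case using multilinear_ext_indicator[OF fin 0] by simp
next
  case (Suc k)
  let ?F = "multilinear_ext E f" and ?free = "free_edges E M"
  let ?\<Phi> = "\<lambda>N. measure_pmf.expectation (mmp_from R k N) f"
  define g where "g = 1 - (1 - q) ^ k"
  have g: "0 \<le> g" "g \<le> 1" using q by (auto simp: g_def power_le_one)
  have free: "e \<in> E" "insert e M \<subseteq> E" if "e \<in> ?free" for e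
    using that Suc.prems by (auto simp: free_edges_def)
  have pmf_free: "(\<Sum>e\<in>?free. pmf R (Some e) * h e) = (\<Sum>e\<in>?free. q * x e * h e)" for h
    using free(1) pmf_R by (intro sum.cong) auto
  have "(\<Sum>e\<in>?free. q * x e) \<le> 1"
    using pmf_free[of "\<lambda>_. 1"] sum_pmf_Some_le_1[of ?free R] fin by (simp add: free_edges_def)
  then have stay_weight: "0 \<le> 1 - (\<Sum>e\<in>?free. q * x e)" by simp
  have edge_weight: "0 \<le> q * x e" if "e \<in> ?free" for e
    using that free(1) q x by (auto simp: unit_cube_def)
  have "?F (relaxed_state x M (1 - (1 - q) ^ Suc k)) = ?F (relaxed_state x M (g + q * (1 - g)))"
    by (simp add: g_def algebra_simps)
  also have "\<dots> \<le> (1 - (\<Sum>e\<in>?free. q * x e)) * ?F (relaxed_state x M g)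
      + (\<Sum>e\<in>?free. q * x e * ?F (relaxed_state x (insert e M) g))"
    by (rule relaxed_state_step[OF fin f x deg g q])
  also have "\<dots> \<le> (1 - (\<Sum>e\<in>?free. q * x e)) * ?\<Phi> M + (\<Sum>e\<in>?free. q * x e * ?\<Phi> (insert e M))"
    using Suc.IH Suc.prems free(2) stay_weight edge_weight unfolding g_def
    by (intro add_mono mult_left_mono sum_mono) auto
  also have "\<dots> = measure_pmf.expectation R (\<lambda>a. ?\<Phi> (mmp_step M a))"
    using expectation_mmp_step[OF fin R, of ?\<Phi> M] pmf_free[of "\<lambda>_. 1"] pmf_free[of "\<lambda>e. ?\<Phi> (insert e M)"]
    by simp
  also have "\<dots> = measure_pmf.expectation (mmp_from R (Suc k) M) f"
    using Suc.prems fin by (intro expectation_mmp_from_Suc[OF R, symmetric]) (auto intro: finite_subset)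
  finally show ?case .
qed

lemma pmf_arrival_pmf:
  assumes "finite V" "\<And>v. v \<in> V \<Longrightarrow> 0 \<le> p v" "(\<Sum>v\<in>V. p v) \<le> 1"
  shows "pmf (arrival_pmf V p) b
    = (case b of None \<Rightarrow> 1 - (\<Sum>v\<in>V. p v) | Some v \<Rightarrow> if v \<in> V then p v else 0)"
  unfolding arrival_pmf_def using assms by (rule pmf_embed_option)

lemma pmf_edge_pmf_Some:
  assumes "finite E" "\<And>e. e \<in> E \<Longrightarrow> 0 \<le> x e" "0 \<le> r" "(\<Sum>e\<in>edges_at_v E v. x e) \<le> r"
  shows "pmf (edge_pmf E x r v) (Some e) = (if e \<in> edges_at_v E v then x e / r else 0)"
proof -
  have "(\<Sum>e\<in>edges_at_v E v. x e / r) \<le> 1"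
    unfolding sum_divide_distrib[symmetric] using assms(3,4) by (cases "r = 0") (auto simp: divide_le_eq_1)
  then show ?thesis
    unfolding edge_pmf_def using assms by (subst pmf_embed_option) (auto simp: edges_at_v_def)
qed

lemma mmp_instanceD:
  assumes "mmp_instance T U V E p x f"
  shows "finite E" "x \<in> unit_cube E" "\<And>u. (\<Sum>e\<in>edges_at_u E u. x e) \<le> 1"
proof -
  have E: "E \<subseteq> U \<times> V" "finite U" "finite V"
    using assms by (auto simp: mmp_instance_def)
  then show "finite E" by (meson finite_SigmaI finite_subset)
  show "x \<in> unit_cube E" using assms by (simp add: mmp_instance_def unit_cube_def)
  show "(\<Sum>e\<in>edges_at_u E u. x e) \<le> 1" for u
  proof (cases "u \<in> U")
    case False
    then have "edges_at_u E u = {}" using E(1) by (auto simp: edges_at_u_def)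
    then show ?thesis by simp
  qed (use assms in \<open>simp add: mmp_instance_def\<close>)
qed

text \<open>Each edge is proposed in a round with probability exactly \<open>x e / T\<close>; the case \<open>p v = 0\<close>,
  where the sampling probability \<open>x e / (T p v)\<close> is a division by zero, is harmless because
  then \<open>x e = 0\<close>.\<close>

lemma pmf_round_pmf_Some:
  assumes inst: "mmp_instance T U V E p x f"
  shows "pmf (round_pmf T V E p x) (Some e) = (if e \<in> E then x e / real T else 0)"
proof -
  have V: "finite V" "\<And>v. v \<in> V \<Longrightarrow> 0 \<le> p v" "(\<Sum>v\<in>V. p v) \<le> 1" and T: "T \<ge> 1"
    and E: "E \<subseteq> U \<times> V" and load: "\<And>v. v \<in> V \<Longrightarrow> (\<Sum>e\<in>edges_at_v E v. x e) \<le> real T * p v"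
    using inst by (auto simp: mmp_instance_def)
  have x: "\<And>e. e \<in> E \<Longrightarrow> 0 \<le> x e" using mmp_instanceD(2)[OF inst] by (simp add: unit_cube_def)
  have arrival: "set_pmf (arrival_pmf V p) \<subseteq> insert None (Some ` V)"
  proof
    fix b assume "b \<in> set_pmf (arrival_pmf V p)"
    then show "b \<in> insert None (Some ` V)"
      using pmf_arrival_pmf[OF V] by (cases b) (auto simp: set_pmf_iff image_iff split: if_splits)
  qed
  have "pmf (round_pmf T V E p x) (Some e)
      = (\<Sum>v\<in>V. pmf (arrival_pmf V p) (Some v) * pmf (edge_pmf E x (real T * p v) v) (Some e))"
    unfolding round_pmf_def pmf_bind using expectation_option_pmf[OF V(1) arrival] by simp
  also have "\<dots> = (\<Sum>v\<in>V. if v = snd e \<and> e \<in> E then p v * (x e / (real T * p v)) else 0)"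
    using V(2) T load by (intro sum.cong refl)
      (auto simp: pmf_arrival_pmf[OF V] pmf_edge_pmf_Some[OF mmp_instanceD(1)[OF inst] x] edges_at_v_def)
  also have "\<dots> = (if e \<in> E then p (snd e) * (x e / (real T * p (snd e))) else 0)"
    using V(1) E by (auto simp: sum.delta')
  also have "\<dots> = (if e \<in> E then x e / real T else 0)"
  proof (cases "e \<in> E \<and> p (snd e) = 0")
    case True
    then have "snd e \<in> V" using E by auto
    have "x e \<le> (\<Sum>e'\<in>edges_at_v E (snd e). x e')"
      using True x mmp_instanceD(1)[OF inst] by (intro member_le_sum) (auto simp: edges_at_v_def)
    then have "x e = 0" using load[OF \<open>snd e \<in> V\<close>] True x[of e] by simp
    then show ?thesis by simp
  qed simp
  finally show ?thesis .
qed

lemma set_pmf_round_pmf: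
  assumes "mmp_instance T U V E p x f"
  shows "set_pmf (round_pmf T V E p x) \<subseteq> insert None (Some ` E)"
proof
  fix b assume "b \<in> set_pmf (round_pmf T V E p x)"
  then show "b \<in> insert None (Some ` E)"
    using pmf_round_pmf_Some[OF assms] by (cases b) (auto simp: set_pmf_iff split: if_splits)
qed

lemma expectation_mmp_alg_ge:
  assumes inst: "mmp_instance T U V E p x f"
  shows "(1 - exp (-1)) * multilinear_ext E f x \<le> measure_pmf.expectation (mmp_alg T V E p x) f"
proof -
  note E = mmp_instanceD[OF inst]
  have f: "monotone_submodular_on E f" and T: "1 \<le> T"
    using inst by (simp_all add: mmp_instance_def)
  define c where "c = 1 - (1 - 1 / real T) ^ T"
  have c: "0 \<le> c" "c \<le> 1" using T by (auto simp: c_def power_le_one)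
  have "1 - exp (-1) \<le> c"
    using T exp_ge_one_minus_x_over_n_power_n[of 1 T] by (simp add: c_def)
  moreover have "0 \<le> multilinear_ext E f x"
    using E(2) by (intro multilinear_ext_nonneg monotone_submodular_onD(1)[OF f])
  ultimately have "(1 - exp (-1)) * multilinear_ext E f x \<le> c * multilinear_ext E f x"
    by (rule mult_right_mono)
  also have "\<dots> \<le> multilinear_ext E f (\<lambda>e. c * x e)"
    by (rule multilinear_ext_scale_ge[OF E(1) f E(2) c])
  also have "\<dots> = multilinear_ext E f (relaxed_state x {} c)"
    by (rule multilinear_ext_cong) (simp add: relaxed_state_def)
  also have "\<dots> \<le> measure_pmf.expectation (mmp_from (round_pmf T V E p x) T {}) f"
    unfolding c_def using T
    by (intro relaxed_state_le_expectation_mmp_from[OF E(1) f E(2,3) _ _ set_pmf_round_pmf[OF inst]])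
      (simp_all add: pmf_round_pmf_Some[OF inst])
  finally show ?thesis by (simp add: mmp_alg_def mmp_run_eq_mmp_from)
qed

text \<open>The bound above holds for every \<open>T\<close>.\<close>

theorem theorem4:
  fixes dummy_u :: 'u and dummy_v :: 'v
  shows "\<forall>\<epsilon>>0. \<exists>\<delta>>0. \<exists>T0::nat. \<forall>T (U::'u set) (V::'v set) E p x f.
     mmp_instance T U V E p x f \<and> T \<ge> T0 \<and> real (card U) \<le> \<delta> * sqrt (real T) \<longrightarrow>
     measure_pmf.expectation (mmp_alg T V E p x) f \<ge> (1 - exp (-1) - \<epsilon>) * multilinear_ext E f x"
proof (intro allI impI)
  fix \<epsilon> :: real
  assume "0 < \<epsilon>"
  have "(1 - exp (-1) - \<epsilon>) * multilinear_ext E f x \<le> measure_pmf.expectation (mmp_alg T V E p x) f"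
    if inst: "mmp_instance T U V E p x f" for T and U :: "'u set" and V :: "'v set" and E p x f
  proof -
    have "0 \<le> multilinear_ext E f x"
      using mmp_instanceD(2)[OF inst] inst
      by (intro multilinear_ext_nonneg) (auto simp: mmp_instance_def monotone_submodular_on_def)
    then have "(1 - exp (-1) - \<epsilon>) * multilinear_ext E f x \<le> (1 - exp (-1)) * multilinear_ext E f x"
      using \<open>0 < \<epsilon>\<close> by (intro mult_right_mono) auto
    also have "\<dots> \<le> measure_pmf.expectation (mmp_alg T V E p x) f"
      by (rule expectation_mmp_alg_ge[OF inst])
    finally show ?thesis .
  qed
  then show "\<exists>\<delta>>0. \<exists>T0::nat. \<forall>T (U::'u set) (V::'v set) E p x f.
     mmp_instance T U V E p x f \<and> T \<ge> T0 \<and> real (card U) \<le> \<delta> * sqrt (real T) \<longrightarrow>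
     measure_pmf.expectation (mmp_alg T V E p x) f \<ge> (1 - exp (-1) - \<epsilon>) * multilinear_ext E f x"
    using zero_less_one by blast
qed

end
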